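(* Let $N$ be a set of $n$ agents and $O$ a set of $n$ objects, each agent $i$ having a strict linear order $\succ_i$ over $O$ and each object $o$ a strict linear order $\succ_o$ over $N$. If a random matching $p$ is claimwise weakly stable, then it is weakly sd-stable.
   Context: A random matching is an $n\times n$ bistochastic matrix $p=[p(i,o)]$; it is deterministic if entries are in $\{0,1\}$. $p$ is claimwise weakly stable if for each $(i,o)\in N\times O$ and each $j\in N$ with $i\succ_o j$, $\sum_{o':o'\succ_i o}p(i,o')\ge p(j,o)$ (with strict preferences this coincides with claimwise stability). For agent $i$ with $o_1\succ_i\dots\succ_i o_n$, $p(i)\succsim_i^{sd}q(i)$ if $\sum_{l=1}^k p(i,o_l)\ge\sum_{l=1}^k q(i,o_l)$ for all $k$, and $p(i)\succ_i^{sd}q(i)$ if additionally $p(i)\neq q(i)$; for object $o$ with $i_1\succ_o\dots\succ_o i_n$, $p(o)\succsim_o^{sd}q(o)$ if $\sum_{l=1}^k p(i_l,o)\ge\sum_{l=1}^k q(i_l,o)$ for all $k$, and $p(o)\succ_o^{sd}q(o)$ if additionally $p(o)\ne q(o)$. $p$ is strongly sd-blocked by $(i,o)$ if there is a deterministic matching $q\ne p$ with $q(i,o)=1$, $q(i)\succ_i^{sd}p(i)$ and $q(o)\succ_o^{sd}p(o)$. $p$ is weakly sd-stable if no pair $(i,o)$ strongly sd-blocks $p$. *)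

theory Defs
  imports Complex_Main
begin

(* R x y  reads  "x is strictly preferred to y" *)
definition strict_linear_on :: "'x set \<Rightarrow> ('x \<Rightarrow> 'x \<Rightarrow> bool) \<Rightarrow> bool" where
  "strict_linear_on A R \<longleftrightarrow>
     (\<forall>x\<in>A. \<not> R x x) \<and>
     (\<forall>x\<in>A. \<forall>y\<in>A. \<forall>z\<in>A. R x y \<longrightarrow> R y z \<longrightarrow> R x z) \<and>
     (\<forall>x\<in>A. \<forall>y\<in>A. x \<noteq> y \<longrightarrow> R x y \<or> R y x)"

definition random_matching :: "'a set \<Rightarrow> 'b set \<Rightarrow> ('a \<Rightarrow> 'b \<Rightarrow> real) \<Rightarrow> bool" where
  "random_matching N Obj p \<longleftrightarrow>
     (\<forall>i\<in>N. \<forall>b\<in>Obj. p i b \<ge> 0) \<and>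
     (\<forall>i\<in>N. (\<Sum>b\<in>Obj. p i b) = 1) \<and>
     (\<forall>b\<in>Obj. (\<Sum>i\<in>N. p i b) = 1)"

definition deterministic_matching :: "'a set \<Rightarrow> 'b set \<Rightarrow> ('a \<Rightarrow> 'b \<Rightarrow> real) \<Rightarrow> bool" where
  "deterministic_matching N Obj q \<longleftrightarrow>
     random_matching N Obj q \<and> (\<forall>i\<in>N. \<forall>b\<in>Obj. q i b = 0 \<or> q i b = 1)"

(* claimwise weak stability; prefA i b b' : b \<succ>_i b';  prefO b i j : i \<succ>_o j *)
definition claimwise_weakly_stable ::
  "'a set \<Rightarrow> 'b set \<Rightarrow> ('a \<Rightarrow> 'b \<Rightarrow> 'b \<Rightarrow> bool) \<Rightarrow> ('b \<Rightarrow> 'a \<Rightarrow> 'a \<Rightarrow> bool)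
     \<Rightarrow> ('a \<Rightarrow> 'b \<Rightarrow> real) \<Rightarrow> bool" where
  "claimwise_weakly_stable N Obj prefA prefO p \<longleftrightarrow>
     (\<forall>i\<in>N. \<forall>b\<in>Obj. \<forall>j\<in>N. prefO b i j \<longrightarrow>
        (\<Sum>b'\<in>{b'\<in>Obj. prefA i b' b}. p i b') \<ge> p j b)"

(* agent i's sd comparison: cumulative sums over the upper contour sets
   {b'. b' \<succeq>_i b} (i.e. the first k objects in i's order, for each k) *)
definition sd_weak_agent ::
  "'b set \<Rightarrow> ('b \<Rightarrow> 'b \<Rightarrow> bool) \<Rightarrow> ('b \<Rightarrow> real) \<Rightarrow> ('b \<Rightarrow> real) \<Rightarrow> bool" where
  "sd_weak_agent Obj R x y \<longleftrightarrow>
     (\<forall>b\<in>Obj. (\<Sum>b'\<in>{b'\<in>Obj. R b' b \<or> b' = b}. x b') \<ge> (\<Sum>b'\<in>{b'\<in>Obj. R b' b \<or> b' = b}. y b'))"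

definition sd_strict_agent ::
  "'b set \<Rightarrow> ('b \<Rightarrow> 'b \<Rightarrow> bool) \<Rightarrow> ('b \<Rightarrow> real) \<Rightarrow> ('b \<Rightarrow> real) \<Rightarrow> bool" where
  "sd_strict_agent Obj R x y \<longleftrightarrow> sd_weak_agent Obj R x y \<and> (\<exists>b\<in>Obj. x b \<noteq> y b)"

definition strongly_sd_blocks ::
  "'a set \<Rightarrow> 'b set \<Rightarrow> ('a \<Rightarrow> 'b \<Rightarrow> 'b \<Rightarrow> bool) \<Rightarrow> ('b \<Rightarrow> 'a \<Rightarrow> 'a \<Rightarrow> bool)
     \<Rightarrow> ('a \<Rightarrow> 'b \<Rightarrow> real) \<Rightarrow> 'a \<Rightarrow> 'b \<Rightarrow> bool" where
  "strongly_sd_blocks N Obj prefA prefO p i b \<longleftrightarrow>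
     (\<exists>q. deterministic_matching N Obj q \<and>
          (\<exists>j\<in>N. \<exists>b'\<in>Obj. q j b' \<noteq> p j b') \<and>
          q i b = 1 \<and>
          sd_strict_agent Obj (prefA i) (q i) (p i) \<and>
          sd_strict_agent N (prefO b) (\<lambda>j. q j b) (\<lambda>j. p j b))"

definition weakly_sd_stable ::
  "'a set \<Rightarrow> 'b set \<Rightarrow> ('a \<Rightarrow> 'b \<Rightarrow> 'b \<Rightarrow> bool) \<Rightarrow> ('b \<Rightarrow> 'a \<Rightarrow> 'a \<Rightarrow> bool)
     \<Rightarrow> ('a \<Rightarrow> 'b \<Rightarrow> real) \<Rightarrow> bool" where
  "weakly_sd_stable N Obj prefA prefO p \<longleftrightarrow>
     (\<forall>i\<in>N. \<forall>b\<in>Obj. \<not> strongly_sd_blocks N Obj prefA prefO p i b)"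

end

theory Submission
  imports Defs
begin

text \<open>
  Suppose \<open>(i, b)\<close> strongly sd-blocks \<open>p\<close> via the deterministic matching \<open>q\<close>. Since \<open>q\<close> gives
  \<open>i\<close> exactly \<open>b\<close>, sd-dominance of \<open>q(i)\<close> over \<open>p(i)\<close> forces \<open>p\<close> to give \<open>i\<close> nothing it
  prefers to \<open>b\<close>, and sd-dominance of \<open>q(b)\<close> over \<open>p(b)\<close> forces \<open>p\<close> to give \<open>b\<close> to nobody
  \<open>b\<close> prefers to \<open>i\<close>. Claimwise stability then forbids any agent that \<open>b\<close> ranks below \<open>i\<close>
  from holding a share of \<open>b\<close>, so \<open>p(i, b) = 1\<close>, whence \<open>p(i) = q(i)\<close>, contradicting strictness.
\<close>

lemma unit_mass_iff_vanishes_elsewhere: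
  fixes f :: "'x \<Rightarrow> real"
  assumes "finite A" "\<forall>z\<in>A. f z \<ge> 0" "sum f A = 1" "a \<in> A"
  shows "f a = 1 \<longleftrightarrow> (\<forall>z\<in>A - {a}. f z = 0)"
proof -
  have split: "sum f A = f a + sum f (A - {a})"
    using assms(1,4) by (simp add: sum.remove)
  have "sum f (A - {a}) = 0 \<longleftrightarrow> (\<forall>z\<in>A - {a}. f z = 0)"
    using assms(1,2) by (intro sum_nonneg_eq_0_iff) auto
  then show ?thesis using split assms(3) by auto
qed

lemma sd_dominated_by_point_mass_vanishes_above:
  fixes x y :: "'x \<Rightarrow> real"
  assumes "finite A" "strict_linear_on A R" "a \<in> A" "c \<in> A" "R c a"
    and "sd_weak_agent A R x y" "\<forall>z\<in>A - {a}. x z = 0" "\<forall>z\<in>A. y z \<ge> 0"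
  shows "y c = 0"
proof -
  let ?U = "{z\<in>A. R z c \<or> z = c}"
  have "\<not> R a a" "R a c \<longrightarrow> R c a \<longrightarrow> R a a"
    using assms(2-4) unfolding strict_linear_on_def by blast+
  then have "a \<notin> ?U" using assms(5) by auto
  then have "sum x ?U = 0"
    using assms(7) by (intro sum.neutral) auto
  moreover have "sum y ?U \<le> sum x ?U"
    using assms(4,6) unfolding sd_weak_agent_def by blast
  moreover have "y c \<le> sum y ?U"
    using assms(1,4,8) by (intro member_le_sum) auto
  moreover have "y c \<ge> 0" using assms(4,8) by blast
  ultimately show ?thesis by linarith
qed

lemma claimwise_weakly_stable_unit_entry:
  assumes "finite N" "strict_linear_on N (prefO b)"
    and "random_matching N Obj p" "claimwise_weakly_stable N Obj prefA prefO p"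
    and "i \<in> N" "b \<in> Obj"
    and above_i: "\<forall>c\<in>Obj. prefA i c b \<longrightarrow> p i c = 0"
    and above_b: "\<forall>j\<in>N. prefO b j i \<longrightarrow> p j b = 0"
  shows "p i b = 1"
proof -
  have nonneg: "\<forall>j\<in>N. p j b \<ge> 0" and total: "(\<Sum>j\<in>N. p j b) = 1"
    using assms(3,6) unfolding random_matching_def by auto
  have claim_i: "(\<Sum>c\<in>{c\<in>Obj. prefA i c b}. p i c) = 0"
    using above_i by (intro sum.neutral) auto
  have below_b: "p j b = 0" if "j \<in> N" "prefO b i j" for j
  proof -
    have "p j b \<le> 0"
      using assms(4-6) that claim_i unfolding claimwise_weakly_stable_def by metis
    then show ?thesis using nonneg that(1) by fastforce
  qed
  have "prefO b j i \<or> prefO b i j" if "j \<in> N - {i}" for j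
    using assms(2,5) that unfolding strict_linear_on_def by blast
  then have "\<forall>j\<in>N - {i}. p j b = 0"
    using above_b below_b by blast
  then show ?thesis
    using unit_mass_iff_vanishes_elsewhere[OF assms(1) nonneg total assms(5)] by blast
qed

theorem proposition33:
  fixes N :: "'a set" and Obj :: "'b set" and n :: nat
    and prefA :: "'a \<Rightarrow> 'b \<Rightarrow> 'b \<Rightarrow> bool" and prefO :: "'b \<Rightarrow> 'a \<Rightarrow> 'a \<Rightarrow> bool"
    and p :: "'a \<Rightarrow> 'b \<Rightarrow> real"
  assumes "finite N" and "finite Obj" and "card N = n" and "card Obj = n"
    and "\<forall>i\<in>N. strict_linear_on Obj (prefA i)"
    and "\<forall>b\<in>Obj. strict_linear_on N (prefO b)"
    and "random_matching N Obj p"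
    and "claimwise_weakly_stable N Obj prefA prefO p"
  shows "weakly_sd_stable N Obj prefA prefO p"
  unfolding weakly_sd_stable_def strongly_sd_blocks_def
proof (intro ballI notI, elim exE conjE)
  fix i b q assume i: "i \<in> N" and b: "b \<in> Obj" and "deterministic_matching N Obj q"
    and qib: "q i b = 1"
    and sd_i: "sd_strict_agent Obj (prefA i) (q i) (p i)"
    and sd_b: "sd_strict_agent N (prefO b) (\<lambda>j. q j b) (\<lambda>j. p j b)"
  then have q: "random_matching N Obj q" unfolding deterministic_matching_def by simp
  have p_nonneg: "\<forall>c\<in>Obj. p i c \<ge> 0" "\<forall>j\<in>N. p j b \<ge> 0"
    using assms(7) i b unfolding random_matching_def by auto
  note mass = unit_mass_iff_vanishes_elsewhere
  have q_i: "\<forall>c\<in>Obj - {b}. q i c = 0"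
    using mass[OF assms(2), of "q i" b] q i b qib unfolding random_matching_def by blast
  have q_b: "\<forall>j\<in>N - {i}. q j b = 0"
    using mass[OF assms(1), of "\<lambda>j. q j b" i] q i b qib unfolding random_matching_def by blast
  have "\<forall>c\<in>Obj. prefA i c b \<longrightarrow> p i c = 0"
    using sd_dominated_by_point_mass_vanishes_above[OF assms(2) _ b _ _ _ q_i p_nonneg(1)]
      assms(5) i sd_i unfolding sd_strict_agent_def by blast
  moreover have "\<forall>j\<in>N. prefO b j i \<longrightarrow> p j b = 0"
    using sd_dominated_by_point_mass_vanishes_above[OF assms(1) _ i _ _ _ q_b p_nonneg(2)]
      assms(6) b sd_b unfolding sd_strict_agent_def by blast
  ultimately have p_ib: "p i b = 1"
    using assms(6) b by (intro claimwise_weakly_stable_unit_entry[OF assms(1) _ assms(7,8) i b]) auto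
  then have "\<forall>c\<in>Obj - {b}. p i c = 0"
    using mass[OF assms(2) p_nonneg(1) _ b] assms(7) i unfolding random_matching_def by blast
  then have "\<forall>c\<in>Obj. q i c = p i c" using q_i qib p_ib by force
  then show False using sd_i unfolding sd_strict_agent_def by blast
qed

end
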